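(* Let $N_1$ and $N_2$ be tree-child phylogenetic networks labeled in the same finite set $S$, each satisfying that no two parents of a hybrid node are connected by a path. Then $N_1\cong N_2$ if and only if $C(N_1)=C(N_2)$.
   Context: A DAG is labeled in $S$ if its leaves (out-degree 0) are bijectively labeled by $S$; isomorphism $\cong$ means isomorphism of directed graphs preserving leaf labels. A tree node has in-degree at most 1; a hybrid node has in-degree greater than 1; a tree child is a child that is a tree node. A tree-child phylogenetic network is a rooted DAG labeled in $S$ in which every non-leaf node has at least one tree child, no tree node has out-degree 1, and every hybrid node has out-degree exactly 1. "No two parents of a hybrid node are connected by a path" means: if $u_1,u_2$ are parents of a hybrid node, there is no path $u_1\rightsquigarrow u_2$ nor $u_2\rightsquigarrow u_1$. For a node $v$, $C(v)$ is the set of leaves that are descendants of $v$, and $C(N)=\{C(v)\mid v\text{ a node of }N\}$. *)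

theory Defs
  imports Main
begin

text \<open>A directed graph is given by a node set V and an edge relation E (pairs (u,w) = edge u -> w).\<close>

definition indeg :: "'v set \<Rightarrow> ('v \<times> 'v) set \<Rightarrow> 'v \<Rightarrow> nat" where
  "indeg V E v = card {u \<in> V. (u, v) \<in> E}"

definition outdeg :: "'v set \<Rightarrow> ('v \<times> 'v) set \<Rightarrow> 'v \<Rightarrow> nat" where
  "outdeg V E v = card {w \<in> V. (v, w) \<in> E}"

definition leaves :: "'v set \<Rightarrow> ('v \<times> 'v) set \<Rightarrow> 'v set" where
  "leaves V E = {v \<in> V. outdeg V E v = 0}"

definition tree_node :: "'v set \<Rightarrow> ('v \<times> 'v) set \<Rightarrow> 'v \<Rightarrow> bool" where
  "tree_node V E v \<longleftrightarrow> indeg V E v \<le> 1"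

definition hybrid_node :: "'v set \<Rightarrow> ('v \<times> 'v) set \<Rightarrow> 'v \<Rightarrow> bool" where
  "hybrid_node V E v \<longleftrightarrow> indeg V E v > 1"

definition rooted_dag :: "'v set \<Rightarrow> ('v \<times> 'v) set \<Rightarrow> bool" where
  "rooted_dag V E \<longleftrightarrow> finite V \<and> E \<subseteq> V \<times> V \<and> acyclic E \<and>
     (\<exists>r \<in> V. \<forall>v \<in> V. (r, v) \<in> E\<^sup>*)"

definition labeled_in :: "'v set \<Rightarrow> ('v \<times> 'v) set \<Rightarrow> ('v \<Rightarrow> 'l) \<Rightarrow> 'l set \<Rightarrow> bool" where
  "labeled_in V E lab S \<longleftrightarrow> bij_betw lab (leaves V E) S"

definition tree_child_network ::
  "'v set \<Rightarrow> ('v \<times> 'v) set \<Rightarrow> ('v \<Rightarrow> 'l) \<Rightarrow> 'l set \<Rightarrow> bool" where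
  "tree_child_network V E lab S \<longleftrightarrow>
     rooted_dag V E \<and> labeled_in V E lab S \<and>
     (\<forall>v \<in> V. v \<notin> leaves V E \<longrightarrow> (\<exists>w \<in> V. (v, w) \<in> E \<and> tree_node V E w)) \<and>
     (\<forall>v \<in> V. tree_node V E v \<longrightarrow> outdeg V E v \<noteq> 1) \<and>
     (\<forall>v \<in> V. hybrid_node V E v \<longrightarrow> outdeg V E v = 1)"

definition no_hybrid_parent_path :: "'v set \<Rightarrow> ('v \<times> 'v) set \<Rightarrow> bool" where
  "no_hybrid_parent_path V E \<longleftrightarrow>
     (\<forall>h \<in> V. hybrid_node V E h \<longrightarrow>
        (\<forall>u1 u2. (u1, h) \<in> E \<longrightarrow> (u2, h) \<in> E \<longrightarrow> u1 \<noteq> u2 \<longrightarrow> (u1, u2) \<notin> E\<^sup>+))"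

definition cluster :: "'v set \<Rightarrow> ('v \<times> 'v) set \<Rightarrow> ('v \<Rightarrow> 'l) \<Rightarrow> 'v \<Rightarrow> 'l set" where
  "cluster V E lab v = lab ` {x \<in> leaves V E. (v, x) \<in> E\<^sup>*}"

definition clusters :: "'v set \<Rightarrow> ('v \<times> 'v) set \<Rightarrow> ('v \<Rightarrow> 'l) \<Rightarrow> 'l set set" where
  "clusters V E lab = cluster V E lab ` V"

definition labeled_iso ::
  "'v set \<Rightarrow> ('v \<times> 'v) set \<Rightarrow> ('v \<Rightarrow> 'l) \<Rightarrow> 'w set \<Rightarrow> ('w \<times> 'w) set \<Rightarrow> ('w \<Rightarrow> 'l) \<Rightarrow> bool" where
  "labeled_iso V1 E1 lab1 V2 E2 lab2 \<longleftrightarrow>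
     (\<exists>f. bij_betw f V1 V2 \<and>
          (\<forall>u \<in> V1. \<forall>w \<in> V1. (u, w) \<in> E1 \<longleftrightarrow> (f u, f w) \<in> E2) \<and>
          (\<forall>x \<in> leaves V1 E1. lab2 (f x) = lab1 x))"

end

theory Submission
  imports Defs
begin

text \<open>In a tree-child network without hybrid parent paths, a tree node is determined by its
  cluster, and for tree nodes \<open>u\<close>, \<open>v\<close> we have \<open>C(v) \<subseteq> C(u)\<close> iff \<open>v\<close> is a descendant of \<open>u\<close>.
  A hybrid node has the same cluster as its only child, which is a tree node. The minimal strict
  superclusters of the cluster of a tree node \<open>t\<close> are the cluster of its parent, if that parent
  is a tree node, and otherwise the clusters of the (at least two, pairwise incomparable) parents
  of its hybrid parent. Hence nodes and edges of the network can be read off from \<open>C(N)\<close> alone,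
  so two such networks with the same clusters are isomorphic to the same graph built from \<open>C(N)\<close>.
  Conversely, isomorphisms preserve clusters in any DAG.\<close>

definition graph_iso :: "('v \<Rightarrow> 'w) \<Rightarrow> 'v set \<Rightarrow> ('v \<times> 'v) set \<Rightarrow> 'w set \<Rightarrow> ('w \<times> 'w) set \<Rightarrow> bool"
  where "graph_iso f V1 E1 V2 E2 \<longleftrightarrow>
    bij_betw f V1 V2 \<and> (\<forall>u \<in> V1. \<forall>w \<in> V1. (u, w) \<in> E1 \<longleftrightarrow> (f u, f w) \<in> E2)"

lemma graph_iso_edge_iff:
  "graph_iso f V1 E1 V2 E2 \<Longrightarrow> u \<in> V1 \<Longrightarrow> w \<in> V1 \<Longrightarrow> (u, w) \<in> E1 \<longleftrightarrow> (f u, f w) \<in> E2"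
  unfolding graph_iso_def by blast

lemma graph_iso_comp:
  assumes "graph_iso f V1 E1 V2 E2" and "graph_iso g V2 E2 V3 E3"
  shows "graph_iso (g \<circ> f) V1 E1 V3 E3"
  using assms bij_betw_trans unfolding graph_iso_def by (metis bij_betwE comp_apply)

lemma graph_iso_the_inv_into:
  assumes iso: "graph_iso f V1 E1 V2 E2"
  shows "graph_iso (the_inv_into V1 f) V2 E2 V1 E1"
proof -
  define g where "g = the_inv_into V1 f"
  have bij: "bij_betw f V1 V2" using iso unfolding graph_iso_def by blast
  have g: "g a \<in> V1" "f (g a) = a" if "a \<in> V2" for a
    using that bij unfolding g_def
    by (auto intro: bij_betw_apply[OF bij_betw_the_inv_into] f_the_inv_into_f_bij_betw)
  have "(a, b) \<in> E2 \<longleftrightarrow> (g a, g b) \<in> E1" if "a \<in> V2" "b \<in> V2" for a b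
    using graph_iso_edge_iff[OF iso, of "g a" "g b"] g that by simp
  then show ?thesis
    unfolding graph_iso_def g_def using bij_betw_the_inv_into[OF bij] by blast
qed

lemma graph_iso_rtrancl_imp:
  assumes iso: "graph_iso f V1 E1 V2 E2" and E1: "E1 \<subseteq> V1 \<times> V1"
    and path: "(u, w) \<in> E1\<^sup>*"
  shows "(f u, f w) \<in> E2\<^sup>*"
  using path
proof (induction rule: rtrancl_induct)
  case (step y z)
  then have "(f y, f z) \<in> E2" using graph_iso_edge_iff[OF iso] E1 by blast
  then show ?case using step.IH by simp
qed simp

lemma graph_iso_rtrancl_iff:
  assumes iso: "graph_iso f V1 E1 V2 E2" and "E1 \<subseteq> V1 \<times> V1" and "E2 \<subseteq> V2 \<times> V2"
    and u: "u \<in> V1" and w: "w \<in> V1"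
  shows "(u, w) \<in> E1\<^sup>* \<longleftrightarrow> (f u, f w) \<in> E2\<^sup>*"
proof
  assume "(f u, f w) \<in> E2\<^sup>*"
  moreover have bij: "bij_betw f V1 V2" using iso unfolding graph_iso_def by blast
  ultimately have "(the_inv_into V1 f (f u), the_inv_into V1 f (f w)) \<in> E1\<^sup>*"
    using graph_iso_rtrancl_imp[OF graph_iso_the_inv_into[OF iso]] assms bij_betwE by metis
  then show "(u, w) \<in> E1\<^sup>*"
    using bij u w by (simp add: bij_betw_def the_inv_into_f_f)
qed (rule graph_iso_rtrancl_imp[OF assms(1,2)])

lemma leaves_iff_no_edge:
  "finite V \<Longrightarrow> v \<in> leaves V E \<longleftrightarrow> v \<in> V \<and> (\<forall>w \<in> V. (v, w) \<notin> E)"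
  unfolding leaves_def outdeg_def by auto

lemma graph_iso_leaves_iff:
  assumes iso: "graph_iso f V1 E1 V2 E2" and fin: "finite V1" "finite V2" and x: "x \<in> V1"
  shows "f x \<in> leaves V2 E2 \<longleftrightarrow> x \<in> leaves V1 E1"
proof -
  have img: "f ` V1 = V2" using iso unfolding graph_iso_def bij_betw_def by blast
  have "x \<in> leaves V1 E1 \<longleftrightarrow> (\<forall>w \<in> V1. (f x, f w) \<notin> E2)"
    using graph_iso_edge_iff[OF iso x] by (simp add: leaves_iff_no_edge[OF fin(1)] x)
  also have "\<dots> \<longleftrightarrow> (\<forall>w \<in> V2. (f x, w) \<notin> E2)"
    unfolding img[symmetric] by blast
  also have "\<dots> \<longleftrightarrow> f x \<in> leaves V2 E2"
    using x img by (auto simp: leaves_iff_no_edge[OF fin(2)])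
  finally show ?thesis ..
qed

lemma graph_iso_cluster:
  assumes iso: "graph_iso f V1 E1 V2 E2"
    and fin: "finite V1" "finite V2" and E: "E1 \<subseteq> V1 \<times> V1" "E2 \<subseteq> V2 \<times> V2"
    and lab: "\<forall>x \<in> leaves V1 E1. lab2 (f x) = lab1 x" and v: "v \<in> V1"
  shows "cluster V2 E2 lab2 (f v) = cluster V1 E1 lab1 v"
proof -
  have img: "f ` V1 = V2" using iso unfolding graph_iso_def bij_betw_def by blast
  have "{y \<in> leaves V2 E2. (f v, y) \<in> E2\<^sup>*} = f ` {x \<in> leaves V1 E1. (v, x) \<in> E1\<^sup>*}"
  proof (intro equalityI subsetI)
    fix y assume y: "y \<in> {y \<in> leaves V2 E2. (f v, y) \<in> E2\<^sup>*}"
    then obtain x where x: "x \<in> V1" "y = f x" using img unfolding leaves_def by blast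
    then show "y \<in> f ` {x \<in> leaves V1 E1. (v, x) \<in> E1\<^sup>*}"
      using y graph_iso_leaves_iff[OF iso fin x(1)] graph_iso_rtrancl_iff[OF iso E v x(1)] by simp
  next
    fix y assume "y \<in> f ` {x \<in> leaves V1 E1. (v, x) \<in> E1\<^sup>*}"
    then obtain x where x: "x \<in> leaves V1 E1" "(v, x) \<in> E1\<^sup>*" "y = f x" by blast
    then have "x \<in> V1" unfolding leaves_def by blast
    then show "y \<in> {y \<in> leaves V2 E2. (f v, y) \<in> E2\<^sup>*}"
      using x graph_iso_leaves_iff[OF iso fin] graph_iso_rtrancl_iff[OF iso E v] by simp
  qed
  then have "cluster V2 E2 lab2 (f v) = (\<lambda>x. lab2 (f x)) ` {x \<in> leaves V1 E1. (v, x) \<in> E1\<^sup>*}"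
    unfolding cluster_def by (simp add: image_image)
  also have "\<dots> = cluster V1 E1 lab1 v"
    unfolding cluster_def using lab by (intro image_cong) auto
  finally show ?thesis .
qed

lemma labeled_iso_imp_clusters_eq:
  assumes "labeled_iso V1 E1 lab1 V2 E2 lab2"
    and "finite V1" "E1 \<subseteq> V1 \<times> V1" "finite V2" "E2 \<subseteq> V2 \<times> V2"
  shows "clusters V1 E1 lab1 = clusters V2 E2 lab2"
proof -
  obtain f where iso: "graph_iso f V1 E1 V2 E2" and lab: "\<forall>x \<in> leaves V1 E1. lab2 (f x) = lab1 x"
    using assms(1) unfolding labeled_iso_def graph_iso_def by blast
  have "clusters V2 E2 lab2 = cluster V2 E2 lab2 ` f ` V1"
    using iso unfolding clusters_def graph_iso_def bij_betw_def by simp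
  also have "\<dots> = cluster V1 E1 lab1 ` V1"
    using graph_iso_cluster[OF iso assms(2,4,3,5) lab] by (simp add: image_image)
  finally show ?thesis unfolding clusters_def by simp
qed

definition minimal_supersets :: "'a set set \<Rightarrow> 'a set \<Rightarrow> 'a set set" where
  "minimal_supersets K A = {B \<in> K. A \<subset> B \<and> \<not> (\<exists>B' \<in> K. A \<subset> B' \<and> B' \<subset> B)}"

lemma minimal_supersets_eqI:
  assumes above: "\<And>B. B \<in> M \<Longrightarrow> B \<in> K \<and> A \<subset> B"
    and covering: "\<And>B. B \<in> K \<Longrightarrow> A \<subset> B \<Longrightarrow> \<exists>B' \<in> M. B' \<subseteq> B"
    and antichain: "\<And>B B'. B \<in> M \<Longrightarrow> B' \<in> M \<Longrightarrow> B \<subseteq> B' \<Longrightarrow> B = B'"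
  shows "minimal_supersets K A = M"
proof (intro equalityI subsetI)
  fix B assume "B \<in> minimal_supersets K A"
  then have B: "B \<in> K" "A \<subset> B" and minimal: "\<forall>B' \<in> K. A \<subset> B' \<longrightarrow> \<not> B' \<subset> B"
    unfolding minimal_supersets_def by auto
  obtain B' where B': "B' \<in> M" "B' \<subseteq> B" using covering[OF B] by blast
  then have "B' = B" using minimal above[OF B'(1)] by (auto simp: psubset_eq)
  with B' show "B \<in> M" by simp
next
  fix B assume B: "B \<in> M"
  have "\<not> B' \<subset> B" if B': "B' \<in> K" "A \<subset> B'" for B'
  proof
    assume "B' \<subset> B"
    obtain B'' where "B'' \<in> M" "B'' \<subseteq> B'" using covering[OF B'] by blast
    then have "B'' = B" using antichain[OF _ B] \<open>B' \<subset> B\<close> by blast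
    with \<open>B'' \<subseteq> B'\<close> \<open>B' \<subset> B\<close> show False by blast
  qed
  with B above show "B \<in> minimal_supersets K A"
    unfolding minimal_supersets_def by simp
qed

definition at_least_two :: "'a set \<Rightarrow> bool" where
  "at_least_two M \<longleftrightarrow> (\<exists>a \<in> M. \<exists>b \<in> M. a \<noteq> b)"

lemma not_at_least_two_empty [simp]: "\<not> at_least_two {}"
  and not_at_least_two_singleton [simp]: "\<not> at_least_two {a}"
  unfolding at_least_two_def by simp_all

text \<open>The network rebuilt from its set of clusters \<open>K\<close>: a tree node \<open>v\<close> becomes \<open>(C(v), True)\<close>
  and a hybrid node \<open>h\<close> becomes \<open>(C(h), False)\<close>. Hybrid nodes are recognised as the clusters
  with at least two minimal strict superclusters (the clusters of their parents).\<close>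

definition cluster_nodes :: "'a set set \<Rightarrow> ('a set \<times> bool) set" where
  "cluster_nodes K =
     {(A, True) | A. A \<in> K} \<union> {(A, False) | A. A \<in> K \<and> at_least_two (minimal_supersets K A)}"

definition cluster_edges :: "'a set set \<Rightarrow> (('a set \<times> bool) \<times> ('a set \<times> bool)) set" where
  "cluster_edges K =
     {((A, True), (B, True)) | A B. minimal_supersets K B = {A}} \<union>
     {((A, True), (B, False)) | A B. A \<in> minimal_supersets K B} \<union>
     {((A, False), (A, True)) | A. True}"

lemma cluster_edges_iff:
  "((A, a), (B, b)) \<in> cluster_edges K \<longleftrightarrow>
     (if a then (if b then minimal_supersets K B = {A} else A \<in> minimal_supersets K B)
      else b \<and> A = B)"
  unfolding cluster_edges_def by auto

locale tree_child_no_parent_path =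
  fixes V :: "'v set" and E :: "('v \<times> 'v) set" and lab :: "'v \<Rightarrow> 'l" and S :: "'l set"
  assumes tree_child: "tree_child_network V E lab S"
    and no_parent_path: "no_hybrid_parent_path V E"
begin

abbreviation C :: "'v \<Rightarrow> 'l set" where "C \<equiv> cluster V E lab"
abbreviation K :: "'l set set" where "K \<equiv> clusters V E lab"
abbreviation tree :: "'v \<Rightarrow> bool" where "tree \<equiv> tree_node V E"

lemma finite_nodes: "finite V"
  and edges_subset: "E \<subseteq> V \<times> V"
  and acyclic_edges: "acyclic E"
  and root_exists: "\<exists>r \<in> V. \<forall>v \<in> V. (r, v) \<in> E\<^sup>*"
  and labels_bij: "bij_betw lab (leaves V E) S"
  using tree_child unfolding tree_child_network_def rooted_dag_def labeled_in_def by auto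

lemma edge_nodes: "(u, v) \<in> E \<Longrightarrow> u \<in> V \<and> v \<in> V"
  using edges_subset by auto

lemma no_cycle: "(u, u) \<notin> E\<^sup>+"
  using acyclic_edges unfolding acyclic_def by blast

lemma leaves_iff: "v \<in> leaves V E \<longleftrightarrow> v \<in> V \<and> (\<forall>w. (v, w) \<notin> E)"
  using leaves_iff_no_edge[OF finite_nodes] edge_nodes by blast

lemma nonleaf_tree_child: "v \<in> V \<Longrightarrow> v \<notin> leaves V E \<Longrightarrow> \<exists>w. (v, w) \<in> E \<and> tree w"
  using tree_child unfolding tree_child_network_def by blast

lemma tree_node_outdeg: "v \<in> V \<Longrightarrow> tree v \<Longrightarrow> outdeg V E v \<noteq> 1"
  using tree_child unfolding tree_child_network_def by blast

lemma hybrid_node_outdeg: "v \<in> V \<Longrightarrow> \<not> tree v \<Longrightarrow> outdeg V E v = 1"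
  using tree_child unfolding tree_child_network_def hybrid_node_def tree_node_def by simp

lemma tree_node_parent_unique:
  assumes "tree w" "(p, w) \<in> E" "(q, w) \<in> E"
  shows "p = q"
proof -
  have "card {u \<in> V. (u, w) \<in> E} \<le> Suc 0"
    using assms(1) unfolding tree_node_def indeg_def by simp
  then show ?thesis
    using card_le_Suc0_iff_eq[of "{u \<in> V. (u, w) \<in> E}"] finite_nodes assms edge_nodes by auto
qed

lemma hybrid_node_two_parents:
  assumes "\<not> tree h"
  obtains p q where "(p, h) \<in> E" "(q, h) \<in> E" "p \<noteq> q"
proof -
  have "\<not> card {u \<in> V. (u, h) \<in> E} \<le> Suc 0"
    using assms unfolding tree_node_def indeg_def by simp
  then show ?thesis
    using card_le_Suc0_iff_eq[of "{u \<in> V. (u, h) \<in> E}"] finite_nodes that by auto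
qed

lemma hybrid_node_child:
  assumes "\<not> tree h" "h \<in> V"
  obtains c where "(h, c) \<in> E" "tree c" "\<And>c'. (h, c') \<in> E \<Longrightarrow> c' = c"
proof -
  have "card {w \<in> V. (h, w) \<in> E} = 1"
    using hybrid_node_outdeg assms unfolding outdeg_def by simp
  then obtain c where c: "{w \<in> V. (h, w) \<in> E} = {c}"
    by (auto simp: card_1_singleton_iff)
  have unique: "c' = c" if "(h, c') \<in> E" for c'
    using c that edge_nodes by blast
  have "h \<notin> leaves V E" using c leaves_iff by blast
  then obtain w where w: "(h, w) \<in> E" "tree w" using nonleaf_tree_child assms(2) by blast
  show ?thesis using that[OF _ _ unique] w unique[OF w(1)] by simp
qed

lemma hybrid_parents_unconnected:
  "(p, h) \<in> E \<Longrightarrow> (q, h) \<in> E \<Longrightarrow> \<not> tree h \<Longrightarrow> p \<noteq> q \<Longrightarrow> (p, q) \<notin> E\<^sup>+"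
  using no_parent_path edge_nodes
  unfolding no_hybrid_parent_path_def hybrid_node_def tree_node_def by fastforce

lemma hybrid_parent_tree:
  assumes "(p, h) \<in> E" "\<not> tree h"
  shows "tree p"
proof (rule ccontr)
  assume "\<not> tree p"
  with assms show False
    using hybrid_node_child[of p] edge_nodes by metis
qed

lemma leaf_tree_node: "x \<in> leaves V E \<Longrightarrow> tree x"
  using hybrid_node_child[of x] leaves_iff by blast

lemma wf_converse_edges: "wf (E\<inverse>)"
  using finite_acyclic_wf_converse acyclic_edges finite_subset[OF edges_subset] finite_nodes
  by blast

text \<open>Follow tree children from \<open>v\<close> down to a leaf \<open>x\<close>: the nodes of this path below \<open>v\<close> have a
  single parent, so every ancestor of \<open>x\<close> is an ancestor of \<open>v\<close> or a proper descendant of \<open>v\<close>.\<close>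

lemma tree_path_leaf:
  assumes "v \<in> V"
  obtains x where "x \<in> leaves V E" "(v, x) \<in> E\<^sup>*"
    and "\<And>u. (u, x) \<in> E\<^sup>* \<Longrightarrow> (u, v) \<in> E\<^sup>* \<or> (v, u) \<in> E\<^sup>+"
proof -
  have "\<exists>x \<in> leaves V E. (v, x) \<in> E\<^sup>* \<and> (\<forall>u. (u, x) \<in> E\<^sup>* \<longrightarrow> (u, v) \<in> E\<^sup>* \<or> (v, u) \<in> E\<^sup>+)"
    using assms
  proof (induction v rule: wf_induct_rule[OF wf_converse_edges, case_names less])
    case (less v)
    show ?case
    proof (cases "v \<in> leaves V E")
      case False
      then obtain w where w: "(v, w) \<in> E" "tree w"
        using nonleaf_tree_child less.prems by blast
      then obtain x where x: "x \<in> leaves V E" "(w, x) \<in> E\<^sup>*"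
        and below_w: "\<forall>u. (u, x) \<in> E\<^sup>* \<longrightarrow> (u, w) \<in> E\<^sup>* \<or> (w, u) \<in> E\<^sup>+"
        using less.IH edge_nodes by blast
      have "(u, v) \<in> E\<^sup>* \<or> (v, u) \<in> E\<^sup>+" if "(u, x) \<in> E\<^sup>*" for u
      proof -
        have "(u, w) \<in> E\<^sup>* \<or> (w, u) \<in> E\<^sup>+" using below_w that by blast
        then show ?thesis
        proof
          assume "(u, w) \<in> E\<^sup>*"
          then show ?thesis
          proof (cases rule: rtranclE)
            case (step p)
            then show ?thesis using tree_node_parent_unique[OF w(2) w(1)] by simp
          qed (use w in blast)
        next
          assume "(w, u) \<in> E\<^sup>+"
          with w(1) show ?thesis by (simp add: trancl_into_trancl2)
        qed
      qed
      moreover have "(v, x) \<in> E\<^sup>*"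
        using w(1) x(2) by (rule converse_rtrancl_into_rtrancl)
      ultimately show ?thesis using x(1) by blast
    qed blast
  qed
  then show ?thesis using that by blast
qed

lemma cluster_antimono: "(u, v) \<in> E\<^sup>* \<Longrightarrow> C v \<subseteq> C u"
  unfolding cluster_def by (auto intro: rtrancl_trans)

lemma lab_in_cluster_iff: "x \<in> leaves V E \<Longrightarrow> lab x \<in> C v \<longleftrightarrow> (v, x) \<in> E\<^sup>*"
  using labels_bij unfolding cluster_def bij_betw_def by (auto dest: inj_onD)

lemma cluster_leaf: "x \<in> leaves V E \<Longrightarrow> C x = {lab x}"
  unfolding cluster_def by (auto elim: converse_rtranclE simp: leaves_iff)

lemma cluster_subset_imp_related:
  assumes "v \<in> V" "C v \<subseteq> C u"
  shows "(u, v) \<in> E\<^sup>* \<or> (v, u) \<in> E\<^sup>+"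
proof -
  obtain x where x: "x \<in> leaves V E" "(v, x) \<in> E\<^sup>*"
    and "\<And>u. (u, x) \<in> E\<^sup>* \<Longrightarrow> (u, v) \<in> E\<^sup>* \<or> (v, u) \<in> E\<^sup>+"
    using tree_path_leaf assms(1) by blast
  moreover have "(u, x) \<in> E\<^sup>*"
    using x assms(2) lab_in_cluster_iff by blast
  ultimately show ?thesis by blast
qed

lemma cluster_hybrid_node:
  assumes "\<not> tree h" "(h, c) \<in> E"
  shows "C c = C h"
proof
  show "C c \<subseteq> C h" using cluster_antimono assms(2) by blast
  have "(c, x) \<in> E\<^sup>*" if "x \<in> leaves V E" "(h, x) \<in> E\<^sup>*" for x
    using that(2)
  proof (cases rule: converse_rtranclE)
    case base
    with that(1) assms(2) show ?thesis by (simp add: leaves_iff)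
  next
    case (step c')
    then show ?thesis
      using hybrid_node_child[OF assms(1)] assms(2) edge_nodes by metis
  qed
  then show "C h \<subseteq> C c" unfolding cluster_def by blast
qed

text \<open>A second child \<open>w\<close> of \<open>u\<close> would lead to a leaf in \<open>C(v)\<close>; the path from \<open>v\<close> to it enters
  \<open>w\<close> through a parent other than \<open>u\<close>, giving a path between two parents of the hybrid \<open>w\<close>.\<close>

lemma tree_node_cluster_not_below_tree_child:
  assumes tu: "tree u" and uv: "(u, v) \<in> E" and tv: "tree v"
  shows "\<not> C u \<subseteq> C v"
proof
  assume Cuv: "C u \<subseteq> C v"
  have "u \<in> V" "v \<in> V" using edge_nodes[OF uv] by auto
  then have "card {w \<in> V. (u, w) \<in> E} \<noteq> card {v}"
    using tree_node_outdeg tu unfolding outdeg_def by simp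
  then have "{w \<in> V. (u, w) \<in> E} \<noteq> {v}" by metis
  moreover have "v \<in> {w \<in> V. (u, w) \<in> E}" using uv \<open>v \<in> V\<close> by blast
  ultimately obtain w where w: "(u, w) \<in> E" "w \<noteq> v" by blast
  obtain z where z: "z \<in> leaves V E" "(w, z) \<in> E\<^sup>*"
    and below_w: "\<And>u. (u, z) \<in> E\<^sup>* \<Longrightarrow> (u, w) \<in> E\<^sup>* \<or> (w, u) \<in> E\<^sup>+"
    using tree_path_leaf edge_nodes[OF w(1)] by blast
  have "lab z \<in> C v"
    using z Cuv cluster_antimono[of u w] w(1) lab_in_cluster_iff by blast
  then have "(v, w) \<in> E\<^sup>* \<or> (w, v) \<in> E\<^sup>+"
    using below_w lab_in_cluster_iff z(1) by blast
  then show False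
  proof
    assume "(w, v) \<in> E\<^sup>+"
    then obtain p where p: "(w, p) \<in> E\<^sup>*" "(p, v) \<in> E" by (meson tranclD2)
    then have "(w, u) \<in> E\<^sup>*" using tree_node_parent_unique[OF tv p(2) uv] by simp
    with w(1) show False using no_cycle by (meson rtrancl_into_trancl2)
  next
    assume "(v, w) \<in> E\<^sup>*"
    then obtain p where p: "(v, p) \<in> E\<^sup>*" "(p, w) \<in> E"
      using w(2) by (metis rtranclE)
    have up: "(u, p) \<in> E\<^sup>+" using uv p(1) by (meson rtrancl_into_trancl2)
    then have "p \<noteq> u" using no_cycle by blast
    then have "\<not> tree w" using tree_node_parent_unique p(2) w(1) by blast
    then show False using hybrid_parents_unconnected[OF w(1) p(2)] \<open>p \<noteq> u\<close> up by blast
  qed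
qed

lemma ancestor_cluster_below_tree_node:
  "u \<in> V \<Longrightarrow> (u, v) \<in> E\<^sup>+ \<Longrightarrow> C u \<subseteq> C v \<Longrightarrow> tree v \<Longrightarrow> (u, v) \<in> E \<and> \<not> tree u"
proof (induction u arbitrary: v rule: wf_induct_rule[OF wf_converse_edges, case_names less])
  case (less u)
  have "u \<notin> leaves V E" using less.prems(2) leaves_iff by (meson converse_tranclE)
  then obtain t where t: "(u, t) \<in> E" "tree t" using nonleaf_tree_child less.prems(1) by blast
  obtain y where y: "y \<in> leaves V E" "(t, y) \<in> E\<^sup>*"
    and below_t: "\<And>u. (u, y) \<in> E\<^sup>* \<Longrightarrow> (u, t) \<in> E\<^sup>* \<or> (t, u) \<in> E\<^sup>+"
    using tree_path_leaf edge_nodes[OF t(1)] by blast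
  have Ctu: "C t \<subseteq> C u" using cluster_antimono t(1) by blast
  then have "lab y \<in> C v" using y less.prems(3) lab_in_cluster_iff by blast
  then have "(v, t) \<in> E\<^sup>* \<or> (t, v) \<in> E\<^sup>+" using below_t lab_in_cluster_iff y(1) by blast
  then have "v = t"
  proof
    assume "(t, v) \<in> E\<^sup>+"
    then have "\<not> tree t"
      using less.IH[of t v] t(1) edge_nodes Ctu less.prems(3,4) by blast
    with t(2) show ?thesis by blast
  next
    assume "(v, t) \<in> E\<^sup>*"
    then show ?thesis
    proof (cases rule: rtranclE)
      case (step p)
      then have "(u, u) \<in> E\<^sup>+"
        using tree_node_parent_unique[OF t(2) _ t(1)] less.prems(2)
        by (metis rtrancl_into_trancl2 trancl_rtrancl_trancl)
      with no_cycle show ?thesis by blast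
    qed simp
  qed
  with t show ?case
    using tree_node_cluster_not_below_tree_child less.prems(3) by blast
qed

lemma tree_cluster_subset_iff:
  assumes "u \<in> V" "v \<in> V" "tree u" "tree v"
  shows "C v \<subseteq> C u \<longleftrightarrow> (u, v) \<in> E\<^sup>*"
proof
  assume "C v \<subseteq> C u"
  then show "(u, v) \<in> E\<^sup>*"
    using cluster_subset_imp_related ancestor_cluster_below_tree_node assms by blast
qed (rule cluster_antimono)

lemma tree_cluster_eq_imp_eq:
  assumes "u \<in> V" "v \<in> V" "tree u" "tree v" "C u = C v"
  shows "u = v"
proof (rule ccontr)
  assume "u \<noteq> v"
  moreover have "(u, v) \<in> E\<^sup>*" "(v, u) \<in> E\<^sup>*" using tree_cluster_subset_iff assms by auto
  ultimately have "(u, u) \<in> E\<^sup>+" by (meson rtranclD trancl_rtrancl_trancl)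
  with no_cycle show False by blast
qed

lemma tree_ancestor_cluster_psubset:
  assumes "(p, t) \<in> E\<^sup>+" "tree p" "tree t"
  shows "C t \<subset> C p"
proof -
  have "p \<in> V" "t \<in> V" using assms(1) edge_nodes by (auto dest: tranclD tranclD2)
  moreover have "p \<noteq> t" using assms(1) no_cycle by blast
  ultimately have "C p \<noteq> C t" using tree_cluster_eq_imp_eq assms(2,3) by blast
  moreover have "C t \<subseteq> C p" using cluster_antimono[OF trancl_into_rtrancl[OF assms(1)]] .
  ultimately show ?thesis by blast
qed

lemma cluster_in_clusters: "v \<in> V \<Longrightarrow> C v \<in> K"
  unfolding clusters_def by blast

lemma clusters_tree_representative:
  assumes "A \<in> K"
  obtains t where "t \<in> V" "tree t" "C t = A"
proof -
  obtain v where v: "v \<in> V" "C v = A" using assms unfolding clusters_def by blast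
  show ?thesis
  proof (cases "tree v")
    case False
    then obtain c where "(v, c) \<in> E" "tree c" using hybrid_node_child v(1) by blast
    then show ?thesis using that cluster_hybrid_node[OF False] edge_nodes v(2) by blast
  qed (use that v in blast)
qed

lemma strict_supercluster_tree_ancestor:
  assumes "t \<in> V" "tree t" "B \<in> K" "C t \<subset> B"
  obtains w where "tree w" "C w = B" "(w, t) \<in> E\<^sup>+"
proof -
  obtain w where w: "w \<in> V" "tree w" "C w = B"
    using clusters_tree_representative assms(3) by blast
  then have "(w, t) \<in> E\<^sup>*" using tree_cluster_subset_iff assms by blast
  moreover have "w \<noteq> t" using w(3) assms(4) by blast
  ultimately have "(w, t) \<in> E\<^sup>+" by (meson rtranclD)
  with that w show ?thesis by blast
qed

lemma minimal_supersets_cluster_root: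
  assumes "t \<in> V" "\<And>p. (p, t) \<notin> E"
  shows "minimal_supersets K (C t) = {}"
proof -
  obtain r where r: "r \<in> V" "\<forall>v \<in> V. (r, v) \<in> E\<^sup>*" using root_exists by blast
  then have "r = t" using assms by (metis rtranclE)
  then have "B \<subseteq> C t" if "B \<in> K" for B
    using that r(2) cluster_antimono unfolding clusters_def by blast
  then show ?thesis unfolding minimal_supersets_def by blast
qed

lemma minimal_supersets_cluster_tree_parent:
  assumes "tree t" "(p, t) \<in> E" "tree p"
  shows "minimal_supersets K (C t) = {C p}"
proof (rule minimal_supersets_eqI)
  have "C p \<in> K" using cluster_in_clusters edge_nodes assms(2) by blast
  moreover have "C t \<subset> C p"
    using tree_ancestor_cluster_psubset[OF r_into_trancl[OF assms(2)] assms(3,1)] .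
  ultimately show "B \<in> K \<and> C t \<subset> B" if "B \<in> {C p}" for B
    using that by simp
next
  fix B assume "B \<in> K" "C t \<subset> B"
  then obtain w where w: "C w = B" "(w, t) \<in> E\<^sup>+"
    using strict_supercluster_tree_ancestor assms(1,2) edge_nodes by blast
  then obtain q where q: "(w, q) \<in> E\<^sup>*" "(q, t) \<in> E" by (meson tranclD2)
  then have "q = p" using tree_node_parent_unique assms(1,2) by blast
  then have "C p \<subseteq> B" using cluster_antimono q(1) w(1) by blast
  then show "\<exists>B' \<in> {C p}. B' \<subseteq> B" by simp
qed simp

lemma hybrid_parents_clusters_antichain:
  assumes "(p, h) \<in> E" "(q, h) \<in> E" "\<not> tree h" "C p \<subseteq> C q"
  shows "p = q"
proof (rule ccontr)
  assume "p \<noteq> q"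
  have "tree p" "tree q" using hybrid_parent_tree assms by blast+
  then have "(q, p) \<in> E\<^sup>*" using tree_cluster_subset_iff assms(1,2,4) edge_nodes by blast
  then have "(q, p) \<in> E\<^sup>+" using \<open>p \<noteq> q\<close> by (metis rtranclD)
  then show False using hybrid_parents_unconnected assms(1-3) \<open>p \<noteq> q\<close> by blast
qed

lemma minimal_supersets_cluster_hybrid_parent:
  assumes "tree t" "(h, t) \<in> E" "\<not> tree h"
  shows "minimal_supersets K (C t) = C ` {p. (p, h) \<in> E}"
proof (rule minimal_supersets_eqI)
  fix B assume "B \<in> C ` {p. (p, h) \<in> E}"
  then obtain p where p: "(p, h) \<in> E" "B = C p" by blast
  then have "(p, t) \<in> E\<^sup>+" using assms(2) by simp
  then have "C t \<subset> C p"
    using tree_ancestor_cluster_psubset hybrid_parent_tree[OF p(1) assms(3)] assms(1) by blast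
  moreover have "C p \<in> K" using cluster_in_clusters edge_nodes p(1) by blast
  ultimately show "B \<in> K \<and> C t \<subset> B" using p(2) by simp
next
  fix B assume "B \<in> K" "C t \<subset> B"
  then obtain w where w: "tree w" "C w = B" "(w, t) \<in> E\<^sup>+"
    using strict_supercluster_tree_ancestor assms(1,2) edge_nodes by blast
  then obtain q where q: "(w, q) \<in> E\<^sup>*" "(q, t) \<in> E" by (meson tranclD2)
  then have "q = h" using tree_node_parent_unique assms(1,2) by blast
  with q(1) have "(w, h) \<in> E\<^sup>*" by simp
  moreover have "w \<noteq> h" using w(1) assms(3) by blast
  ultimately obtain p where "(w, p) \<in> E\<^sup>*" "(p, h) \<in> E" by (metis rtranclE)
  then show "\<exists>B' \<in> C ` {p. (p, h) \<in> E}. B' \<subseteq> B"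
    using cluster_antimono w(2) by blast
next
  fix B B' assume "B \<in> C ` {p. (p, h) \<in> E}" "B' \<in> C ` {p. (p, h) \<in> E}" "B \<subseteq> B'"
  then show "B = B'" using hybrid_parents_clusters_antichain assms(3) by blast
qed

lemma at_least_two_minimal_supersets_iff:
  assumes "t \<in> V" "tree t"
  shows "at_least_two (minimal_supersets K (C t)) \<longleftrightarrow> (\<exists>h. (h, t) \<in> E \<and> \<not> tree h)"
proof
  assume two: "at_least_two (minimal_supersets K (C t))"
  then obtain h where h: "(h, t) \<in> E"
    using minimal_supersets_cluster_root assms(1) by fastforce
  show "\<exists>h. (h, t) \<in> E \<and> \<not> tree h"
  proof (cases "tree h")
    case True
    then show ?thesis using two minimal_supersets_cluster_tree_parent[OF assms(2) h] by simp
  qed (use h in blast)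
next
  assume "\<exists>h. (h, t) \<in> E \<and> \<not> tree h"
  then obtain h where h: "(h, t) \<in> E" "\<not> tree h" by blast
  obtain p q where pq: "(p, h) \<in> E" "(q, h) \<in> E" "p \<noteq> q"
    using hybrid_node_two_parents h(2) by blast
  then have "C p \<noteq> C q" using hybrid_parents_clusters_antichain h(2) by blast
  then show "at_least_two (minimal_supersets K (C t))"
    unfolding minimal_supersets_cluster_hybrid_parent[OF assms(2) h] at_least_two_def
    using pq by blast
qed

lemma tree_tree_edge_iff:
  assumes "u \<in> V" "w \<in> V" "tree u" "tree w"
  shows "(u, w) \<in> E \<longleftrightarrow> minimal_supersets K (C w) = {C u}"
proof
  assume "(u, w) \<in> E"
  then show "minimal_supersets K (C w) = {C u}"
    using minimal_supersets_cluster_tree_parent assms(3,4) by blast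
next
  assume singleton: "minimal_supersets K (C w) = {C u}"
  then obtain p where p: "(p, w) \<in> E"
    using minimal_supersets_cluster_root assms(2) by fastforce
  have "tree p"
    using singleton at_least_two_minimal_supersets_iff[OF assms(2,4)] p by auto
  then have "C p = C u"
    using singleton minimal_supersets_cluster_tree_parent[OF assms(4) p] by simp
  then have "p = u" using tree_cluster_eq_imp_eq \<open>tree p\<close> assms(1,3) edge_nodes p by blast
  with p show "(u, w) \<in> E" by simp
qed

lemma tree_hybrid_edge_iff:
  assumes "u \<in> V" "w \<in> V" "tree u" "\<not> tree w"
  shows "(u, w) \<in> E \<longleftrightarrow> C u \<in> minimal_supersets K (C w)"
proof -
  obtain c where c: "(w, c) \<in> E" "tree c" using hybrid_node_child assms(2,4) by blast
  have "minimal_supersets K (C w) = C ` {p. (p, w) \<in> E}"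
    using minimal_supersets_cluster_hybrid_parent[OF c(2,1) assms(4)]
      cluster_hybrid_node[OF assms(4) c(1)] by simp
  moreover have "u = p" if "(p, w) \<in> E" "C u = C p" for p
    using tree_cluster_eq_imp_eq hybrid_parent_tree[OF that(1) assms(4)] that assms(1,3) edge_nodes
    by blast
  ultimately show ?thesis by blast
qed

lemma hybrid_tree_edge_iff:
  assumes "u \<in> V" "w \<in> V" "\<not> tree u" "tree w"
  shows "(u, w) \<in> E \<longleftrightarrow> C u = C w"
proof
  assume "(u, w) \<in> E"
  then show "C u = C w" using cluster_hybrid_node assms(3) by simp
next
  assume eq: "C u = C w"
  obtain c where c: "(u, c) \<in> E" "tree c" using hybrid_node_child assms(1,3) by blast
  then have "C c = C w" using cluster_hybrid_node[OF assms(3)] eq by simp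
  then have "c = w" using tree_cluster_eq_imp_eq c(2) assms(2,4) edge_nodes c(1) by blast
  with c show "(u, w) \<in> E" by simp
qed

definition cluster_code :: "'v \<Rightarrow> 'l set \<times> bool" where
  "cluster_code v = (C v, tree v)"

lemma inj_on_cluster_code: "inj_on cluster_code V"
proof (rule inj_onI)
  fix u v assume uv: "u \<in> V" "v \<in> V" "cluster_code u = cluster_code v"
  then have C_eq: "C u = C v" and tree_eq: "tree u \<longleftrightarrow> tree v"
    unfolding cluster_code_def by simp_all
  show "u = v"
  proof (cases "tree u")
    case False
    obtain cu where cu: "(u, cu) \<in> E" "tree cu" using hybrid_node_child False uv(1) by blast
    obtain cv where cv: "(v, cv) \<in> E" "tree cv" using hybrid_node_child False tree_eq uv(2) by blast
    have "C cu = C cv" using cluster_hybrid_node cu cv False tree_eq C_eq by simp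
    then have "cu = cv" using tree_cluster_eq_imp_eq cu cv edge_nodes by blast
    then show ?thesis using tree_node_parent_unique[OF cu(2) cu(1)] cv(1) by simp
  qed (use tree_cluster_eq_imp_eq uv C_eq tree_eq in blast)
qed

lemma cluster_code_image: "cluster_code ` V = cluster_nodes K"
proof (intro equalityI subsetI)
  fix x assume "x \<in> cluster_code ` V"
  then obtain v where v: "v \<in> V" "x = cluster_code v" by (rule imageE) simp
  show "x \<in> cluster_nodes K"
  proof (cases "tree v")
    case False
    then obtain c where c: "(v, c) \<in> E" "tree c" using hybrid_node_child v(1) by blast
    then have "at_least_two (minimal_supersets K (C c))"
      using at_least_two_minimal_supersets_iff False edge_nodes by blast
    then have "at_least_two (minimal_supersets K (C v))"
      using cluster_hybrid_node[OF False c(1)] by simp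
    then show ?thesis
      using v False cluster_in_clusters unfolding cluster_nodes_def cluster_code_def by simp
  qed (use v cluster_in_clusters in \<open>simp add: cluster_nodes_def cluster_code_def\<close>)
next
  fix x assume "x \<in> cluster_nodes K"
  then obtain A b where x: "x = (A, b)" "A \<in> K" and hybrid: "\<not> b \<Longrightarrow> at_least_two (minimal_supersets K A)"
    unfolding cluster_nodes_def by blast
  obtain t where t: "t \<in> V" "tree t" "C t = A" using clusters_tree_representative x(2) by blast
  show "x \<in> cluster_code ` V"
  proof (cases b)
    case False
    then obtain h where h: "(h, t) \<in> E" "\<not> tree h"
      using hybrid at_least_two_minimal_supersets_iff t by blast
    then have "x = cluster_code h"
      using x t False cluster_hybrid_node unfolding cluster_code_def by simp
    then show ?thesis using h edge_nodes by blast
  qed (use x t in \<open>auto simp: cluster_code_def\<close>)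
qed

lemma cluster_code_edge_iff:
  assumes uw: "u \<in> V" "w \<in> V"
  shows "(u, w) \<in> E \<longleftrightarrow> (cluster_code u, cluster_code w) \<in> cluster_edges K"
proof (cases "tree u"; cases "tree w")
  assume "\<not> tree u" "\<not> tree w"
  then show ?thesis using hybrid_parent_tree[of u w] by (auto simp: cluster_code_def cluster_edges_iff)
qed (simp_all add: cluster_code_def cluster_edges_iff tree_tree_edge_iff[OF uw]
       tree_hybrid_edge_iff[OF uw] hybrid_tree_edge_iff[OF uw])

lemma graph_iso_cluster_code: "graph_iso cluster_code V E (cluster_nodes K) (cluster_edges K)"
  unfolding graph_iso_def bij_betw_def
  using inj_on_cluster_code cluster_code_image cluster_code_edge_iff by blast

lemma cluster_code_leaf: "x \<in> leaves V E \<Longrightarrow> cluster_code x = ({lab x}, True)"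
  using cluster_leaf leaf_tree_node unfolding cluster_code_def by simp

end

lemma clusters_eq_imp_labeled_iso:
  assumes N1: "tree_child_no_parent_path V1 E1 lab1 S1" and N2: "tree_child_no_parent_path V2 E2 lab2 S2"
    and K: "clusters V1 E1 lab1 = clusters V2 E2 lab2"
  shows "labeled_iso V1 E1 lab1 V2 E2 lab2"
proof -
  interpret N1: tree_child_no_parent_path V1 E1 lab1 S1 by (fact N1)
  interpret N2: tree_child_no_parent_path V2 E2 lab2 S2 by (fact N2)
  define f where "f = the_inv_into V2 N2.cluster_code \<circ> N1.cluster_code"
  have code1: "graph_iso N1.cluster_code V1 E1 (cluster_nodes N2.K) (cluster_edges N2.K)"
    using N1.graph_iso_cluster_code K by simp
  have iso: "graph_iso f V1 E1 V2 E2"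
    unfolding f_def
    using graph_iso_comp[OF code1 graph_iso_the_inv_into[OF N2.graph_iso_cluster_code]] .
  have "lab2 (f x) = lab1 x" if x: "x \<in> leaves V1 E1" for x
  proof -
    have "x \<in> V1" using x unfolding leaves_def by blast
    then have "f x \<in> leaves V2 E2"
      using graph_iso_leaves_iff[OF iso N1.finite_nodes N2.finite_nodes] x by blast
    moreover have "N1.cluster_code x \<in> cluster_nodes N2.K"
      using N1.cluster_code_image K \<open>x \<in> V1\<close> by (metis imageI)
    then have "N2.cluster_code (f x) = N1.cluster_code x"
      unfolding f_def by (simp add: f_the_inv_into_f[OF N2.inj_on_cluster_code] N2.cluster_code_image)
    ultimately show ?thesis using N1.cluster_code_leaf[OF x] N2.cluster_code_leaf by simp
  qed
  with iso show ?thesis unfolding labeled_iso_def graph_iso_def by blast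
qed

theorem theorem8:
  fixes V1 :: "'v set" and E1 :: "('v \<times> 'v) set" and lab1 :: "'v \<Rightarrow> 'l"
    and V2 :: "'w set" and E2 :: "('w \<times> 'w) set" and lab2 :: "'w \<Rightarrow> 'l"
    and S :: "'l set"
  assumes "finite S"
    and "tree_child_network V1 E1 lab1 S" and "no_hybrid_parent_path V1 E1"
    and "tree_child_network V2 E2 lab2 S" and "no_hybrid_parent_path V2 E2"
  shows "labeled_iso V1 E1 lab1 V2 E2 lab2 \<longleftrightarrow> clusters V1 E1 lab1 = clusters V2 E2 lab2"
proof -
  interpret N1: tree_child_no_parent_path V1 E1 lab1 S using assms(2,3) by unfold_locales
  interpret N2: tree_child_no_parent_path V2 E2 lab2 S using assms(4,5) by unfold_locales
  show ?thesis
    using labeled_iso_imp_clusters_eq[OF _ N1.finite_nodes N1.edges_subset N2.finite_nodes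
        N2.edges_subset]
      clusters_eq_imp_labeled_iso[OF N1.tree_child_no_parent_path_axioms N2.tree_child_no_parent_path_axioms]
    by blast
qed

end
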